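(* Consider binary-payoff, perfect-news collective choice problems (as in the context) with a fixed number $n$ of voters, each described by $(P_W,v)$ with $v=(v_w,v_\ell)$. (a) If two such problems have the same $P_W$ and payoffs $v,v'$ with $v_\ell/v_w\ge v'_\ell/v'_w$, then $(P_W,v)\succeq_{AC}(P_W,v')$. (b) If two such problems have the same payoffs $v$ and winner distributions $P_W,P'_W$ with $P_W\succeq_{LR}P'_W$, then $(P'_W,v)\succeq_{AC}(P_W,v)$.
   Context: Setting: $n\ge3$ odd, $\tau=(n-1)/2$, voters $1,\dots,n$ vote for $p^*$ or $p_*$, a policy wins iff it gets more than $\tau$ votes. A state $\omega$ specifies each voter's payoff difference $V_i^d$ between $p^*$ and $p_*$ and a signal $s_i\in\mathcal S=\{s^0,\dots,s^K\}$ privately observed by $i$ ($\mathcal M=\{s^1,\dots,s^K\}$ informative); $P$ is the probability on states. Standing assumptions: $P$ invariant under permutations of voters; if $s_i=s^0$ then $s_i$ is independent of $(V,S_{-i})$; for $s_i\ne s^0$, $E[V_i^d\mid S=s]>0$ iff $E[V_i^d\mid S_i=s_i]>0$; conditional expectations of $V_i^d$ given non-null events are nonzero; $P(B\ge1)>0$ and $P(G\ge\tau)>0$, where $G$ ($B$) counts voters whose signal $s^k$ is good news, $E[V_i^d\mid S_i=s^k]>0$ (bad news, $<0$). Binary payoffs: $V_i^d\in\{v_w,-v_\ell\}$ with $v_w,v_\ell>0$; $W_i=\{V_i^d>0\}$ (voter $i$ is a winner), $W$ = number of winners, $P_W$ the distribution of $W$ on $\{0,\dots,n\}$; $p^*$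 is ex ante optimal: $P(W_i)v_w-(1-P(W_i))v_\ell>0$. Perfect news: $P(W_i\mid S_i=s^k)\in\{0,1\}$ for every informative $s^k$. Then the problem is represented by $(P_W,v)$, and $V^G(\kappa\mid P_W,v)=E[V_i^d\mid G=\kappa,B=0,S_i=s^0]$ depends only on $(P_W,v)$. The polarization ratio is $v_\ell/v_w$. $(P_W,v)\succeq_{AC}(P'_W,v')$ ("more adversely correlated") means: for every $\kappa\in\{1,\dots,\tau\}$, $V^G(\kappa\mid P'_W,v')<0$ implies $V^G(\kappa\mid P_W,v)<0$. $P'_W\succeq_{LR}P_W$ (likelihood-ratio dominance) means $P'_W(w')P_W(w)\ge P'_W(w)P_W(w')$ whenever $w'>w$. *)

theory Defs
  imports "HOL-Probability.Probability"
begin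

text \<open>Binary-payoff, perfect-news collective choice problems with n voters, represented
  by (P_W, v) where P_W is the distribution of the number W of winners on {0..n}
  and v = (v_w, v_l).  tau = (n-1)/2.\<close>

definition tau :: "nat \<Rightarrow> nat" where
  "tau n = (n - 1) div 2"

text \<open>Standing assumptions, expressed in terms of (P_W, v):
  P_W is supported on {0..n}; v_w, v_l > 0; p^* is ex ante optimal,
  P(W_i) v_w - (1 - P(W_i)) v_l > 0 with P(W_i) = E[W]/n (exchangeability);
  P(G >= tau) > 0 (which under perfect news forces P(W >= tau) > 0);
  P(B >= 1) > 0 (which forces P(W < n) > 0).\<close>

definition bp_problem :: "nat \<Rightarrow> nat pmf \<Rightarrow> real \<Rightarrow> real \<Rightarrow> bool" where
  "bp_problem n PW vw vl \<longleftrightarrow>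
     set_pmf PW \<subseteq> {..n} \<and> 0 < vw \<and> 0 < vl \<and>
     (measure_pmf.expectation PW real / real n) * vw
       - (1 - measure_pmf.expectation PW real / real n) * vl > 0 \<and>
     measure_pmf.prob PW {tau n..} > 0 \<and>
     measure_pmf.prob PW {..<n} > 0"

text \<open>V^G(kappa | P_W, v) = E[V_i^d | G = kappa, B = 0, S_i = s^0].
  Null signals are independent of everything (probability q each), and under
  perfect news informed voters reveal their winner status. Conditional on W = w,
  the event {S_i = s^0, G = kappa, B = 0} together with W_i has probability
  (w/n) C(w-1,kappa) q^(n-kappa) (1-q)^kappa (voter i a winner) and
  ((n-w)/n) C(w,kappa) q^(n-kappa) (1-q)^kappa (voter i a loser); the common
  factor cancels in the conditional expectation, giving the formula below.\<close>

definition VG :: "nat \<Rightarrow> nat pmf \<Rightarrow> real \<Rightarrow> real \<Rightarrow> nat \<Rightarrow> real" where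
  "VG n PW vw vl \<kappa> =
     (\<Sum>w\<le>n. pmf PW w * (real w * real ((w - 1) choose \<kappa>) * vw
                          - real (n - w) * real (w choose \<kappa>) * vl))
     / (\<Sum>w\<le>n. pmf PW w * (real w * real ((w - 1) choose \<kappa>)
                          + real (n - w) * real (w choose \<kappa>)))"

definition more_adv_corr ::
  "nat \<Rightarrow> nat pmf \<Rightarrow> real \<Rightarrow> real \<Rightarrow> nat pmf \<Rightarrow> real \<Rightarrow> real \<Rightarrow> bool" where
  "more_adv_corr n PW vw vl PW' vw' vl' \<longleftrightarrow>
     (\<forall>\<kappa>\<in>{1..tau n}. VG n PW' vw' vl' \<kappa> < 0 \<longrightarrow> VG n PW vw vl \<kappa> < 0)"

definition lr_dom :: "nat pmf \<Rightarrow> nat pmf \<Rightarrow> bool" where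
  "lr_dom P' P \<longleftrightarrow>
     (\<forall>w w'. w' > w \<longrightarrow> pmf P' w' * pmf P w \<ge> pmf P' w * pmf P w')"

end

theory Submission
  imports Defs
begin

text \<open>
  (a) Scaling both payoffs by c scales V^G by c, so the sign of V^G depends only on the
  polarization ratio; and V^G is antitone in the loss v_l.
  (b) For \<kappa> \<ge> 1 the identity w C(w-1,\<kappa>) = (w-\<kappa>) C(w,\<kappa>) makes the sign of V^G the sign of
  the mean of the increasing function h(w) = (w-\<kappa>) v_w - (n-w) v_l under the weights
  P_W(w) C(w,\<kappa>).  Likelihood-ratio dominance survives the common factor C(w,\<kappa>), and it can
  only raise the mean of an increasing function.
\<close>

lemma sum_mult_sum_le_if_ratio_dominates:
  fixes p q h :: "'a::linorder \<Rightarrow> real"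
  assumes "finite A"
    and ratio: "\<And>x y. x \<in> A \<Longrightarrow> y \<in> A \<Longrightarrow> x < y \<Longrightarrow> p x * q y \<le> p y * q x"
    and "mono_on A h"
  shows "(\<Sum>x\<in>A. p x) * (\<Sum>x\<in>A. q x * h x) \<le> (\<Sum>x\<in>A. p x * h x) * (\<Sum>x\<in>A. q x)"
proof -
  define D where "D = (\<Sum>x\<in>A. \<Sum>y\<in>A. p x * q y * (h x - h y))"
  have pair_nonneg: "0 \<le> (p x * q y - p y * q x) * (h x - h y)" if "x \<in> A" "y \<in> A" for x y
  proof (cases x y rule: linorder_cases)
    case less
    then show ?thesis using ratio[of x y] mono_onD[OF \<open>mono_on A h\<close>, of x y] that
      by (intro mult_nonpos_nonpos) auto
  next
    case greater
    then show ?thesis using ratio[of y x] mono_onD[OF \<open>mono_on A h\<close>, of y x] that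
      by (intro mult_nonneg_nonneg) auto
  qed simp
  have "2 * D = D + (\<Sum>x\<in>A. \<Sum>y\<in>A. p y * q x * (h y - h x))"
    unfolding D_def by (subst sum.swap) simp
  also have "\<dots> = (\<Sum>x\<in>A. \<Sum>y\<in>A. (p x * q y - p y * q x) * (h x - h y))"
    unfolding D_def sum.distrib[symmetric] by (intro sum.cong refl) (simp add: algebra_simps)
  also have "\<dots> \<ge> 0"
    using pair_nonneg by (intro sum_nonneg) auto
  finally have "0 \<le> D" by simp
  have "D = (\<Sum>x\<in>A. \<Sum>y\<in>A. p x * h x * q y) - (\<Sum>x\<in>A. \<Sum>y\<in>A. p x * (q y * h y))"
    unfolding D_def sum_subtractf[symmetric] by (intro sum.cong refl) (simp add: algebra_simps)
  also have "\<dots> = (\<Sum>x\<in>A. p x * h x) * (\<Sum>x\<in>A. q x) - (\<Sum>x\<in>A. p x) * (\<Sum>x\<in>A. q x * h x)"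
    by (simp only: sum_product)
  finally show ?thesis using \<open>0 \<le> D\<close> by simp
qed

lemma VG_scale: "VG n P (c * vw) (c * vl) \<kappa> = c * VG n P vw vl \<kappa>"
  unfolding VG_def by (simp add: sum_distrib_left algebra_simps)

lemma VG_antimono_loss:
  assumes "vl' \<le> vl"
  shows "VG n P vw vl \<kappa> \<le> VG n P vw vl' \<kappa>"
  unfolding VG_def
proof (intro divide_right_mono sum_mono sum_nonneg)
  fix w
  have "real (n - w) * real (w choose \<kappa>) * vl' \<le> real (n - w) * real (w choose \<kappa>) * vl"
    using assms by (intro mult_left_mono) auto
  then show "pmf P w * (real w * real ((w - 1) choose \<kappa>) * vw - real (n - w) * real (w choose \<kappa>) * vl)
    \<le> pmf P w * (real w * real ((w - 1) choose \<kappa>) * vw - real (n - w) * real (w choose \<kappa>) * vl')"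
    by (intro mult_left_mono) auto
qed auto

lemma VG_neg_iff_ratio:
  assumes "0 < vw"
  shows "VG n P vw vl \<kappa> < 0 \<longleftrightarrow> VG n P 1 (vl / vw) \<kappa> < 0"
proof -
  have "VG n P vw vl \<kappa> = vw * VG n P 1 (vl / vw) \<kappa>"
    using assms VG_scale[of n P vw 1 "vl / vw" \<kappa>] by simp
  then show ?thesis using assms by (simp add: mult_less_0_iff)
qed

lemma more_adv_corr_if_ratio_ge:
  assumes "0 < vw" "0 < vw'" "vl' / vw' \<le> vl / vw"
  shows "more_adv_corr n P vw vl P vw' vl'"
  unfolding more_adv_corr_def
proof (intro ballI impI)
  fix \<kappa> assume "VG n P vw' vl' \<kappa> < 0"
  then have "VG n P 1 (vl' / vw') \<kappa> < 0"
    using VG_neg_iff_ratio[OF assms(2)] by simp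
  then have "VG n P 1 (vl / vw) \<kappa> < 0"
    by (rule order.strict_trans1[OF VG_antimono_loss[OF assms(3)]])
  then show "VG n P vw vl \<kappa> < 0"
    using VG_neg_iff_ratio[OF assms(1)] by simp
qed

lemma times_choose_pred:
  assumes "1 \<le> k"
  shows "real w * real ((w - 1) choose k) = (real w - real k) * real (w choose k)"
proof (cases "k \<le> w")
  case True
  have "real ((w - k) * (w choose k)) = real (w * ((w - 1) choose k))"
    by (simp only: binomial_absorb_comp)
  then show ?thesis
    using True by (simp add: of_nat_diff)
next
  case False
  then show ?thesis using assms by (simp add: binomial_eq_0)
qed

lemma VG_eq_weighted_mean:
  assumes "1 \<le> \<kappa>"
  shows "VG n P vw vl \<kappa> =
    (\<Sum>w\<le>n. pmf P w * real (w choose \<kappa>) * ((real w - real \<kappa>) * vw - (real n - real w) * vl))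
    / ((real n - real \<kappa>) * (\<Sum>w\<le>n. pmf P w * real (w choose \<kappa>)))"
  unfolding VG_def sum_distrib_left
proof (intro arg_cong2[where f = "(/)"] sum.cong refl)
  fix w assume "w \<in> {..n}"
  then have "real (n - w) = real n - real w" by (simp add: of_nat_diff)
  then show "pmf P w * (real w * real ((w - 1) choose \<kappa>) * vw - real (n - w) * real (w choose \<kappa>) * vl)
    = pmf P w * real (w choose \<kappa>) * ((real w - real \<kappa>) * vw - (real n - real w) * vl)"
    and "pmf P w * (real w * real ((w - 1) choose \<kappa>) + real (n - w) * real (w choose \<kappa>))
    = (real n - real \<kappa>) * (pmf P w * real (w choose \<kappa>))"
    unfolding times_choose_pred[OF assms] by (simp_all add: algebra_simps)
qed

lemma VG_neg_iff_weighted_sum_neg: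
  assumes "1 \<le> \<kappa>" "\<kappa> < n"
  shows "VG n P vw vl \<kappa> < 0 \<longleftrightarrow>
    (\<Sum>w\<le>n. pmf P w * real (w choose \<kappa>) * ((real w - real \<kappa>) * vw - (real n - real w) * vl)) < 0
    \<and> 0 < (\<Sum>w\<le>n. pmf P w * real (w choose \<kappa>))"
proof -
  have sign: "S / (d * Q) < 0 \<longleftrightarrow> S < 0 \<and> 0 < Q" if "0 < d" "0 \<le> Q" for S d Q :: real
    using that by (auto simp: divide_less_0_iff zero_less_mult_iff mult_less_0_iff)
  show ?thesis
    unfolding VG_eq_weighted_mean[OF assms(1)]
    by (rule sign) (use assms(2) in \<open>auto intro: sum_nonneg\<close>)
qed

lemma VG_neg_if_lr_dom:
  assumes "lr_dom P P'" "0 < vw" "0 < vl" "1 \<le> \<kappa>" "\<kappa> < n"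
    and pos: "0 < (\<Sum>w\<le>n. pmf P' w * real (w choose \<kappa>))"
    and neg: "VG n P vw vl \<kappa> < 0"
  shows "VG n P' vw vl \<kappa> < 0"
proof -
  define q where "q Q w = pmf Q w * real (w choose \<kappa>)" for Q w
  define h where "h w = (real w - real \<kappa>) * vw - (real n - real w) * vl" for w
  have ratio: "q P x * q P' y \<le> q P y * q P' x" if "x < y" for x y
  proof -
    have "pmf P x * pmf P' y \<le> pmf P y * pmf P' x"
      using \<open>lr_dom P P'\<close> that unfolding lr_dom_def by simp
    then have "pmf P x * pmf P' y * (real (x choose \<kappa>) * real (y choose \<kappa>))
        \<le> pmf P y * pmf P' x * (real (x choose \<kappa>) * real (y choose \<kappa>))"
      by (rule mult_right_mono) simp
    then show ?thesis
      unfolding q_def by (simp add: ac_simps)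
  qed
  have "mono_on {..n} h"
    unfolding h_def using assms(2,3)
    by (intro mono_onI diff_mono mult_right_mono) auto
  then have "(\<Sum>w\<le>n. q P w) * (\<Sum>w\<le>n. q P' w * h w) \<le> (\<Sum>w\<le>n. q P w * h w) * (\<Sum>w\<le>n. q P' w)"
    using ratio by (intro sum_mult_sum_le_if_ratio_dominates[where p = "q P" and q = "q P'"]) auto
  also have "\<dots> < 0"
    using neg pos unfolding VG_neg_iff_weighted_sum_neg[OF assms(4,5)] q_def h_def
    by (simp add: mult_neg_pos)
  finally have "(\<Sum>w\<le>n. q P w) * (\<Sum>w\<le>n. q P' w * h w) < 0" .
  moreover have "0 \<le> (\<Sum>w\<le>n. q P w)"
    unfolding q_def by (intro sum_nonneg) auto
  ultimately have "(\<Sum>w\<le>n. q P' w * h w) < 0"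
    by (auto simp: mult_less_0_iff)
  with pos show ?thesis
    unfolding VG_neg_iff_weighted_sum_neg[OF assms(4,5)] q_def h_def by simp
qed

lemma bp_problem_expected_choose_pos:
  assumes "bp_problem n P vw vl" "\<kappa> \<le> tau n"
  shows "0 < (\<Sum>w\<le>n. pmf P w * real (w choose \<kappa>))"
proof -
  have "measure_pmf.prob P {tau n..} \<noteq> 0" "set_pmf P \<subseteq> {..n}"
    using assms(1) unfolding bp_problem_def by auto
  then obtain w0 where w0: "w0 \<in> set_pmf P" "tau n \<le> w0" "w0 \<le> n"
    unfolding measure_pmf_zero_iff by auto
  have "0 < pmf P w0 * real (w0 choose \<kappa>)"
    using w0 assms(2) by (simp add: pmf_positive)
  then show ?thesis
    using w0(3) by (intro sum_pos2[of "{..n}" w0]) auto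
qed

lemma more_adv_corr_if_lr_dom:
  assumes "bp_problem n P' vw vl" "lr_dom P P'"
  shows "more_adv_corr n P' vw vl P vw vl"
  unfolding more_adv_corr_def
proof (intro ballI impI)
  fix \<kappa> assume \<kappa>: "\<kappa> \<in> {1..tau n}" and neg: "VG n P vw vl \<kappa> < 0"
  then have "1 \<le> \<kappa>" "\<kappa> < n"
    unfolding tau_def by auto
  moreover have "0 < vw" "0 < vl"
    using assms(1) unfolding bp_problem_def by auto
  moreover have "0 < (\<Sum>w\<le>n. pmf P' w * real (w choose \<kappa>))"
    using bp_problem_expected_choose_pos[OF assms(1)] \<kappa> by simp
  ultimately show "VG n P' vw vl \<kappa> < 0"
    using VG_neg_if_lr_dom[OF assms(2) _ _ _ _ _ neg] by blast
qed

theorem proposition3: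
  fixes n :: nat
  assumes "odd n" and "n \<ge> 3"
  shows "(\<forall>PW vw vl vw' vl'. bp_problem n PW vw vl \<and> bp_problem n PW vw' vl'
            \<and> vl / vw \<ge> vl' / vw'
            \<longrightarrow> more_adv_corr n PW vw vl PW vw' vl')
       \<and> (\<forall>PW PW' vw vl. bp_problem n PW vw vl \<and> bp_problem n PW' vw vl
            \<and> lr_dom PW PW'
            \<longrightarrow> more_adv_corr n PW' vw vl PW vw vl)"
proof (intro conjI allI impI)
  fix PW vw vl vw' vl'
  assume "bp_problem n PW vw vl \<and> bp_problem n PW vw' vl' \<and> vl' / vw' \<le> vl / vw"
  then show "more_adv_corr n PW vw vl PW vw' vl'"
    unfolding bp_problem_def by (blast intro: more_adv_corr_if_ratio_ge)
next
  fix PW PW' vw vl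
  assume "bp_problem n PW vw vl \<and> bp_problem n PW' vw vl \<and> lr_dom PW PW'"
  then show "more_adv_corr n PW' vw vl PW vw vl"
    by (blast intro: more_adv_corr_if_lr_dom)
qed

end
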